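(* Let $T:\mathbb{R}^d\to\mathbb{R}^d$ be nonexpansive with respect to a norm $\|\cdot\|$ on $\mathbb{R}^d$, with $\operatorname{Fix}T\neq\emptyset$. Let $(\beta_n)_{n\ge1}\subseteq(0,1)$ be nondecreasing with $\lim_n\beta_n=1$, let $x^0\in\mathbb{R}^d$, and let $(x^n)_{n\ge1}$ be generated by $$x^n=(1-\beta_n)x^0+\beta_n\bigl(Tx^{n-1}+U_n\bigr),\qquad n\ge1,$$ where $(U_n)_{n\ge1}$ are random vectors in $\mathbb{R}^d$ with $\mathbb{E}(U_n)=0$ and $\sigma_n:=\mathbb{E}(\|U_n\|)<\infty$. Assume there is $\bar\kappa\ge0$ with $\sup_{n\ge0}\mathbb{E}(\|Tx^n-x^0\|)\le\bar\kappa$. Then for all $n\ge1$, $$\mathbb{E}(\|x^n-Tx^n\|)\le\bar\kappa(1-\beta_n)+\sum_{i=1}^n B_i^n\bigl(\bar\kappa(\beta_i-\beta_{i-1})+\beta_i\sigma_i+\beta_{i-1}\sigma_{i-1}\bigr)+\beta_n\sigma_n.$$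
   Context: Notation: $B_i^n:=\prod_{j=i}^n\beta_j$, with the conventions $\sigma_0=\beta_0=0$ and $B_i^n=1$ if $i>n\ge0$. $\operatorname{Fix}T$ denotes the set of fixed points of $T$. *)

theory Defs
  imports "HOL-Probability.Probability"
begin

definition is_norm :: "(real ^ 'd \<Rightarrow> real) \<Rightarrow> bool" where
  "is_norm N \<longleftrightarrow>
     (\<forall>x. N x = 0 \<longleftrightarrow> x = 0) \<and>
     (\<forall>c x. N (c *\<^sub>R x) = \<bar>c\<bar> * N x) \<and>
     (\<forall>x y. N (x + y) \<le> N x + N y)"

definition nonexpansive_wrt :: "(real ^ 'd \<Rightarrow> real) \<Rightarrow> (real ^ 'd \<Rightarrow> real ^ 'd) \<Rightarrow> bool" where
  "nonexpansive_wrt N T \<longleftrightarrow> (\<forall>x y. N (T x - T y) \<le> N (x - y))"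

definition betaz :: "(nat \<Rightarrow> real) \<Rightarrow> nat \<Rightarrow> real" where
  "betaz \<beta> i = (if i = 0 then 0 else \<beta> i)"

definition sigmaE :: "'w measure \<Rightarrow> (real ^ 'd \<Rightarrow> real) \<Rightarrow> (nat \<Rightarrow> 'w \<Rightarrow> real ^ 'd) \<Rightarrow> nat \<Rightarrow> real" where
  "sigmaE M N U i = (if i = 0 then 0 else (\<integral>\<omega>. N (U i \<omega>) \<partial>M))"

definition Bprod :: "(nat \<Rightarrow> real) \<Rightarrow> nat \<Rightarrow> nat \<Rightarrow> real" where
  "Bprod \<beta> i n = (\<Prod>j=i..n. betaz \<beta> j)"

end

theory Submission
  imports Defs
begin

(*
  With beta_0 = 0, consecutive iterates differ by
    x_n - x_{n-1} = (beta_n - beta_{n-1}) (T x_{n-1} - x0) + beta_{n-1} (T x_{n-1} - T x_{n-2})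
                    + beta_n U_n - beta_{n-1} U_{n-1},
  so by nonexpansiveness the expected step lengths d_n = E N(x_n - x_{n-1}) satisfy
  d_n <= a_n + beta_{n-1} d_{n-1}, where a_n is the summand of the claimed bound; unrolling this
  gives beta_n d_n <= sum_{i=1..n} B_i^n a_i. The residual
    x_n - T x_n = (1 - beta_n) (x0 - T x_n) + beta_n (T x_{n-1} - T x_n) + beta_n U_n
  therefore has expected norm at most kappa (1 - beta_n) + beta_n d_n + beta_n sigma_n.
  The iterates are measurable because T is continuous: every norm on R^d dominates a multiple
  of the Euclidean norm.
*)

lemma is_norm_zero: "is_norm N \<Longrightarrow> N 0 = 0"
  unfolding is_norm_def by blast

lemma is_norm_scaleR: "is_norm N \<Longrightarrow> N (c *\<^sub>R x) = \<bar>c\<bar> * N x"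
  unfolding is_norm_def by blast

lemma is_norm_triangle: "is_norm N \<Longrightarrow> N (x + y) \<le> N x + N y"
  unfolding is_norm_def by blast

lemma is_norm_minus: "is_norm N \<Longrightarrow> N (- x) = N x"
  using is_norm_scaleR[of N "-1" x] by simp

lemma is_norm_commute: "is_norm N \<Longrightarrow> N (x - y) = N (y - x)"
  using is_norm_minus[of N "x - y"] by simp

lemma is_norm_nonneg: "is_norm N \<Longrightarrow> 0 \<le> N x"
  using is_norm_triangle[of N x "- x"] is_norm_minus[of N x] is_norm_zero[of N] by simp

lemma is_norm_pos: "is_norm N \<Longrightarrow> x \<noteq> 0 \<Longrightarrow> 0 < N x"
  using is_norm_nonneg[of N x] unfolding is_norm_def by force

lemma convex_on_is_norm: "is_norm N \<Longrightarrow> convex_on UNIV N"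
  by (rule convex_onI) (simp_all add: is_norm_triangle is_norm_scaleR order_trans[OF is_norm_triangle])

lemma continuous_on_is_norm: "is_norm N \<Longrightarrow> continuous_on UNIV N"
  by (simp add: convex_on_continuous convex_on_is_norm)

text \<open>\<open>m\<close> is the minimum of \<open>N\<close> on the compact Euclidean unit sphere.\<close>

lemma is_norm_ge_norm:
  fixes N :: "real ^ 'd \<Rightarrow> real"
  assumes N: "is_norm N"
  obtains m where "0 < m" "\<And>y. m * norm y \<le> N y"
proof -
  have "sphere (0::real ^ 'd) 1 \<noteq> {}"
    using vector_choose_size[of 1] by auto
  then obtain z where z: "z \<in> sphere 0 1" and z_min: "\<And>y. y \<in> sphere 0 1 \<Longrightarrow> N z \<le> N y"
    using continuous_attains_inf[OF compact_sphere _ continuous_on_subset[OF continuous_on_is_norm[OF N]]]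
    by blast
  have "N z * norm y \<le> N y" for y
  proof (cases "y = 0")
    case False
    then have "N z \<le> N ((1 / norm y) *\<^sub>R y)"
      by (intro z_min) simp
    also have "\<dots> = N y / norm y"
      by (simp add: is_norm_scaleR[OF N])
    finally show ?thesis
      using False by (simp add: field_simps)
  qed (simp add: is_norm_zero[OF N])
  moreover have "0 < N z"
    using z by (intro is_norm_pos[OF N]) auto
  ultimately show thesis
    using that by blast
qed

lemma continuous_on_nonexpansive:
  fixes N :: "real ^ 'd \<Rightarrow> real"
  assumes N: "is_norm N" and T: "nonexpansive_wrt N T"
  shows "continuous_on UNIV T"
proof -
  obtain m where m: "0 < m" "\<And>y. m * norm y \<le> N y"
    using is_norm_ge_norm[OF N] by blast
  have "isCont T a" for a
  proof -
    have "((\<lambda>y. N (y - a)) \<longlongrightarrow> N (a - a)) (at a)"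
      by (intro continuous_on_tendsto_compose[OF continuous_on_is_norm[OF N]] tendsto_intros) auto
    then have lim: "((\<lambda>y. N (y - a) / m) \<longlongrightarrow> 0) (at a)"
      by (intro tendsto_divide_zero) (simp add: is_norm_zero[OF N])
    have "norm (T y - T a) \<le> N (y - a) / m" for y
    proof -
      have "m * norm (T y - T a) \<le> N (T y - T a)"
        by (rule m(2))
      also have "\<dots> \<le> N (y - a)"
        using T unfolding nonexpansive_wrt_def by blast
      finally show ?thesis
        by (simp add: pos_le_divide_eq[OF m(1)] mult.commute)
    qed
    then have "\<forall>\<^sub>F y in at a. norm (T y - T a) \<le> N (y - a) / m"
      by simp
    then have "((\<lambda>y. T y - T a) \<longlongrightarrow> 0) (at a)"
      using lim by (rule Lim_null_comparison)
    then show ?thesis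
      by (simp add: isCont_def LIM_zero_iff)
  qed
  then show ?thesis
    by (simp add: continuous_at_imp_continuous_on)
qed

lemma Bprod_empty: "n < i \<Longrightarrow> Bprod \<beta> i n = 1"
  by (simp add: Bprod_def)

lemma Bprod_Suc: "i \<le> Suc n \<Longrightarrow> Bprod \<beta> i (Suc n) = betaz \<beta> (Suc n) * Bprod \<beta> i n"
  by (simp add: Bprod_def prod.nat_ivl_Suc')

lemma betaz_mult_sum_Bprod:
  "betaz \<beta> n * (\<Sum>i=1..n. Bprod \<beta> i (n - 1) * a i) = (\<Sum>i=1..n. Bprod \<beta> i n * a i)"
proof (cases n)
  case (Suc m)
  show ?thesis
    unfolding Suc diff_Suc_1 sum_distrib_left
    by (rule sum.cong) (simp_all add: Bprod_Suc mult.assoc)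
qed (simp add: betaz_def)

lemma sum_Bprod_Suc:
  "(\<Sum>i=1..Suc n. Bprod \<beta> i n * a i) = a (Suc n) + (\<Sum>i=1..n. Bprod \<beta> i n * a i)"
  by (simp add: Bprod_empty)

lemma halpern_step_diff_le:
  assumes N: "is_norm N" and T: "nonexpansive_wrt N T" and b: "0 \<le> b" "b \<le> b'"
    and y: "y = (1 - b) *\<^sub>R x0 + b *\<^sub>R (T z + u)"
    and y': "y' = (1 - b') *\<^sub>R x0 + b' *\<^sub>R (T y + u')"
  shows "N (y' - y) \<le> (b' - b) * N (T y - x0) + b * N (y - z) + b' * N u' + b * N u"
proof -
  have "y' - y = (b' - b) *\<^sub>R (T y - x0) + b *\<^sub>R (T y - T z) + b' *\<^sub>R u' - b *\<^sub>R u"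
    by (subst y', subst (2) y) (simp add: algebra_simps)
  moreover have "N (p + q + r - s) \<le> N p + N q + N r + N s" for p q r s
    using is_norm_triangle[OF N, of "p + q + r" "- s"] is_norm_triangle[OF N, of "p + q" r]
      is_norm_triangle[OF N, of p q] is_norm_minus[OF N, of s] by simp
  ultimately have "N (y' - y) \<le> N ((b' - b) *\<^sub>R (T y - x0)) + N (b *\<^sub>R (T y - T z)) + N (b' *\<^sub>R u') + N (b *\<^sub>R u)"
    by simp
  also have "\<dots> \<le> (b' - b) * N (T y - x0) + b * N (y - z) + b' * N u' + b * N u"
    using b T unfolding nonexpansive_wrt_def
    by (simp add: is_norm_scaleR[OF N] mult_left_mono)
  finally show ?thesis .
qed

lemma halpern_residual_le:
  assumes N: "is_norm N" and T: "nonexpansive_wrt N T" and b: "0 \<le> b" "b \<le> 1"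
    and y: "y = (1 - b) *\<^sub>R x0 + b *\<^sub>R (T z + u)"
  shows "N (y - T y) \<le> (1 - b) * N (T y - x0) + b * N (y - z) + b * N u"
proof -
  have "y - T y = (1 - b) *\<^sub>R (x0 - T y) + b *\<^sub>R (T z - T y) + b *\<^sub>R u"
    by (subst (1) y) (simp add: algebra_simps)
  moreover have "N (p + q + r) \<le> N p + N q + N r" for p q r
    using is_norm_triangle[OF N, of "p + q" r] is_norm_triangle[OF N, of p q] by simp
  ultimately have "N (y - T y) \<le> N ((1 - b) *\<^sub>R (x0 - T y)) + N (b *\<^sub>R (T z - T y)) + N (b *\<^sub>R u)"
    by simp
  also have "\<dots> \<le> (1 - b) * N (T y - x0) + b * N (y - z) + b * N u"
  proof -
    have "N (T z - T y) \<le> N (y - z)"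
      using T is_norm_commute[OF N, of "T z"] is_norm_commute[OF N, of z]
      unfolding nonexpansive_wrt_def by metis
    then show ?thesis
      using b by (simp add: is_norm_scaleR[OF N] is_norm_commute[OF N, of x0] mult_left_mono)
  qed
  finally show ?thesis .
qed

lemma nn_integral_add_le:
  fixes f g :: "'a \<Rightarrow> real"
  assumes "f \<in> borel_measurable M" "g \<in> borel_measurable M" "\<And>\<omega>. 0 \<le> f \<omega>" "\<And>\<omega>. 0 \<le> g \<omega>"
    and "(\<integral>\<^sup>+\<omega>. f \<omega> \<partial>M) \<le> ennreal A" "(\<integral>\<^sup>+\<omega>. g \<omega> \<partial>M) \<le> ennreal B" "0 \<le> A" "0 \<le> B"
  shows "(\<integral>\<^sup>+\<omega>. ennreal (f \<omega> + g \<omega>) \<partial>M) \<le> ennreal (A + B)"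
proof -
  have "(\<integral>\<^sup>+\<omega>. ennreal (f \<omega> + g \<omega>) \<partial>M) = (\<integral>\<^sup>+\<omega>. f \<omega> \<partial>M) + (\<integral>\<^sup>+\<omega>. g \<omega> \<partial>M)"
    using assms(1-4) by (simp add: ennreal_plus nn_integral_add)
  also have "\<dots> \<le> ennreal (A + B)"
    using assms(5-8) by (simp add: ennreal_plus add_mono)
  finally show ?thesis .
qed

lemma nn_integral_cmult_le:
  fixes f :: "'a \<Rightarrow> real"
  assumes "f \<in> borel_measurable M" "0 \<le> c" "(\<integral>\<^sup>+\<omega>. f \<omega> \<partial>M) \<le> ennreal A"
  shows "(\<integral>\<^sup>+\<omega>. ennreal (c * f \<omega>) \<partial>M) \<le> ennreal (c * A)"
proof -
  have "(\<integral>\<^sup>+\<omega>. ennreal (c * f \<omega>) \<partial>M) = ennreal c * (\<integral>\<^sup>+\<omega>. f \<omega> \<partial>M)"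
    using assms(1,2) by (simp add: ennreal_mult' nn_integral_cmult)
  also have "\<dots> \<le> ennreal (c * A)"
    using assms(2,3) by (simp add: ennreal_mult' mult_left_mono)
  finally show ?thesis .
qed

lemma sigmaE_nonneg: "is_norm N \<Longrightarrow> 0 \<le> sigmaE M N U n"
  by (simp add: sigmaE_def is_norm_nonneg)

text \<open>The estimate only uses the triangle inequality.\<close>

locale stochastic_halpern =
  fixes N :: "real ^ 'd \<Rightarrow> real"
    and T :: "real ^ 'd \<Rightarrow> real ^ 'd"
    and M :: "'w measure"
    and \<beta> :: "nat \<Rightarrow> real"
    and x0 :: "real ^ 'd"
    and x :: "nat \<Rightarrow> 'w \<Rightarrow> real ^ 'd"
    and U :: "nat \<Rightarrow> 'w \<Rightarrow> real ^ 'd"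
    and \<kappa> :: real
  assumes norm: "is_norm N"
    and nonexpansive: "nonexpansive_wrt N T"
    and beta_range: "\<And>n. 1 \<le> n \<Longrightarrow> 0 \<le> \<beta> n \<and> \<beta> n \<le> 1"
    and beta_mono: "\<And>n. 1 \<le> n \<Longrightarrow> \<beta> n \<le> \<beta> (Suc n)"
    and x_0: "\<And>\<omega>. x 0 \<omega> = x0"
    and x_step: "\<And>n \<omega>. 1 \<le> n \<Longrightarrow> x n \<omega> = (1 - \<beta> n) *\<^sub>R x0 + \<beta> n *\<^sub>R (T (x (n - 1) \<omega>) + U n \<omega>)"
    and U_measurable: "\<And>n. 1 \<le> n \<Longrightarrow> U n \<in> borel_measurable M"
    and U_norm_integrable: "\<And>n. 1 \<le> n \<Longrightarrow> integrable M (\<lambda>\<omega>. N (U n \<omega>))"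
    and kappa_nonneg: "0 \<le> \<kappa>"
    and T_deviation_bound: "\<And>n. (\<integral>\<^sup>+\<omega>. ennreal (N (T (x n \<omega>) - x0)) \<partial>M) \<le> ennreal \<kappa>"
begin

lemma betaz_nonneg: "0 \<le> betaz \<beta> n"
  using beta_range[of n] by (simp add: betaz_def)

lemma betaz_mono: "betaz \<beta> n \<le> betaz \<beta> (Suc n)"
  using beta_range[of "Suc n"] beta_mono[of n] by (cases n) (simp_all add: betaz_def)

lemma Bprod_nonneg: "0 \<le> Bprod \<beta> i n"
  by (simp add: Bprod_def prod_nonneg betaz_nonneg)

text \<open>With \<open>\<beta>\<^sub>0 = 0\<close> the recursion also holds for \<open>n = 0\<close>, whatever \<open>U 0\<close> is.\<close>

lemma x_recursion: "x n \<omega> = (1 - betaz \<beta> n) *\<^sub>R x0 + betaz \<beta> n *\<^sub>R (T (x (n - 1) \<omega>) + U n \<omega>)"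
  by (cases "n = 0") (simp_all add: betaz_def x_0 x_step)

lemma N_measurable [measurable]: "N \<in> borel_measurable borel"
  by (rule borel_measurable_continuous_onI[OF continuous_on_is_norm[OF norm]])

lemma T_measurable [measurable]: "T \<in> borel_measurable borel"
  by (rule borel_measurable_continuous_onI[OF continuous_on_nonexpansive[OF norm nonexpansive]])

lemma x_measurable [measurable]: "x n \<in> borel_measurable M"
proof (induction n)
  case 0
  then show ?case
    by (simp add: x_0)
next
  case (Suc n)
  have "x (Suc n) = (\<lambda>\<omega>. (1 - \<beta> (Suc n)) *\<^sub>R x0 + \<beta> (Suc n) *\<^sub>R (T (x n \<omega>) + U (Suc n) \<omega>))"
    using x_step[of "Suc n"] by auto
  then show ?case
    using Suc U_measurable[of "Suc n"] by simp
qed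

lemma noise_measurable: "(\<lambda>\<omega>. betaz \<beta> n * N (U n \<omega>)) \<in> borel_measurable M"
  using U_measurable[of n] by (cases "n = 0") (simp_all add: betaz_def)

lemma noise_nn_integral_le:
  "(\<integral>\<^sup>+\<omega>. ennreal (betaz \<beta> n * N (U n \<omega>)) \<partial>M) \<le> ennreal (betaz \<beta> n * sigmaE M N U n)"
proof (cases "n = 0")
  case False
  then have "(\<integral>\<^sup>+\<omega>. ennreal (N (U n \<omega>)) \<partial>M) = ennreal (sigmaE M N U n)"
    using U_norm_integrable[of n] by (simp add: sigmaE_def nn_integral_eq_integral is_norm_nonneg[OF norm])
  then show ?thesis
    using False U_measurable[of n] by (intro nn_integral_cmult_le betaz_nonneg) simp_all
qed (simp add: betaz_def)

definition step_increment :: "nat \<Rightarrow> real" where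
  "step_increment i = \<kappa> * (betaz \<beta> i - betaz \<beta> (i - 1))
     + betaz \<beta> i * sigmaE M N U i + betaz \<beta> (i - 1) * sigmaE M N U (i - 1)"

definition step_bound :: "nat \<Rightarrow> real" where
  "step_bound n = (\<Sum>i=1..n. Bprod \<beta> i (n - 1) * step_increment i)"

lemma step_increment_nonneg: "0 \<le> step_increment i"
proof -
  have "betaz \<beta> (i - 1) \<le> betaz \<beta> i"
    using betaz_mono[of "i - 1"] by (cases i) simp_all
  then show ?thesis
    unfolding step_increment_def
    by (intro add_nonneg_nonneg mult_nonneg_nonneg kappa_nonneg betaz_nonneg sigmaE_nonneg[OF norm]) simp
qed

lemma step_bound_nonneg: "0 \<le> step_bound n"
  unfolding step_bound_def by (intro sum_nonneg mult_nonneg_nonneg Bprod_nonneg step_increment_nonneg)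

lemma step_bound_Suc: "step_bound (Suc n) = step_increment (Suc n) + betaz \<beta> n * step_bound n"
  by (simp only: step_bound_def diff_Suc_1 sum_Bprod_Suc betaz_mult_sum_Bprod)

lemma expected_step_le: "(\<integral>\<^sup>+\<omega>. ennreal (N (x n \<omega> - x (n - 1) \<omega>)) \<partial>M) \<le> ennreal (step_bound n)"
proof (induction n)
  case 0
  then show ?case
    by (simp add: is_norm_zero[OF norm])
next
  case (Suc m)
  let ?b = "betaz \<beta> m" and ?b' = "betaz \<beta> (Suc m)"
  have "(\<integral>\<^sup>+\<omega>. ennreal (N (x (Suc m) \<omega> - x m \<omega>)) \<partial>M)
      \<le> (\<integral>\<^sup>+\<omega>. ennreal ((?b' - ?b) * N (T (x m \<omega>) - x0) + ?b * N (x m \<omega> - x (m - 1) \<omega>)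
                        + ?b' * N (U (Suc m) \<omega>) + ?b * N (U m \<omega>)) \<partial>M)"
    using x_recursion[of m] x_recursion[of "Suc m"]
    by (intro nn_integral_mono ennreal_leI halpern_step_diff_le[OF norm nonexpansive betaz_nonneg betaz_mono])
      simp_all
  also have "\<dots> \<le> ennreal ((?b' - ?b) * \<kappa> + ?b * step_bound m + ?b' * sigmaE M N U (Suc m) + ?b * sigmaE M N U m)"
  proof -
    have "(\<integral>\<^sup>+\<omega>. ennreal ((?b' - ?b) * N (T (x m \<omega>) - x0)) \<partial>M) \<le> ennreal ((?b' - ?b) * \<kappa>)"
      using betaz_mono[of m] by (intro nn_integral_cmult_le T_deviation_bound) simp_all
    moreover have "(\<integral>\<^sup>+\<omega>. ennreal (?b * N (x m \<omega> - x (m - 1) \<omega>)) \<partial>M) \<le> ennreal (?b * step_bound m)"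
      using Suc.IH by (intro nn_integral_cmult_le betaz_nonneg) simp_all
    ultimately show ?thesis
      using betaz_mono[of m] noise_measurable[of m] noise_measurable[of "Suc m"]
        noise_nn_integral_le[of m] noise_nn_integral_le[of "Suc m"]
      by (intro nn_integral_add_le)
        (simp_all add: is_norm_nonneg[OF norm] betaz_nonneg kappa_nonneg step_bound_nonneg sigmaE_nonneg[OF norm])
  qed
  also have "\<dots> = ennreal (step_bound (Suc m))"
    by (simp add: step_bound_Suc step_increment_def algebra_simps)
  finally show ?case
    by simp
qed

lemma expected_residual_le:
  assumes "1 \<le> n"
  shows "(\<integral>\<^sup>+\<omega>. ennreal (N (x n \<omega> - T (x n \<omega>))) \<partial>M)
    \<le> ennreal (\<kappa> * (1 - \<beta> n) + (\<Sum>i=1..n. Bprod \<beta> i n * step_increment i) + \<beta> n * sigmaE M N U n)"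
proof -
  let ?b = "betaz \<beta> n"
  have b: "?b = \<beta> n" "?b \<le> 1"
    using assms beta_range[of n] by (simp_all add: betaz_def)
  have "(\<integral>\<^sup>+\<omega>. ennreal (N (x n \<omega> - T (x n \<omega>))) \<partial>M)
      \<le> (\<integral>\<^sup>+\<omega>. ennreal ((1 - ?b) * N (T (x n \<omega>) - x0) + ?b * N (x n \<omega> - x (n - 1) \<omega>)
                        + ?b * N (U n \<omega>)) \<partial>M)"
    using x_recursion[of n]
    by (intro nn_integral_mono ennreal_leI halpern_residual_le[OF norm nonexpansive betaz_nonneg b(2)])
      simp_all
  also have "\<dots> \<le> ennreal ((1 - ?b) * \<kappa> + ?b * step_bound n + ?b * sigmaE M N U n)"
  proof -
    have "(\<integral>\<^sup>+\<omega>. ennreal ((1 - ?b) * N (T (x n \<omega>) - x0)) \<partial>M) \<le> ennreal ((1 - ?b) * \<kappa>)"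
      using b(2) by (intro nn_integral_cmult_le T_deviation_bound) simp_all
    moreover have "(\<integral>\<^sup>+\<omega>. ennreal (?b * N (x n \<omega> - x (n - 1) \<omega>)) \<partial>M) \<le> ennreal (?b * step_bound n)"
      using expected_step_le[of n] by (intro nn_integral_cmult_le betaz_nonneg) simp_all
    ultimately show ?thesis
      using b(2) noise_measurable[of n] noise_nn_integral_le[of n]
      by (intro nn_integral_add_le)
        (simp_all add: is_norm_nonneg[OF norm] betaz_nonneg kappa_nonneg step_bound_nonneg sigmaE_nonneg[OF norm])
  qed
  also have "\<dots> = ennreal (\<kappa> * (1 - \<beta> n) + (\<Sum>i=1..n. Bprod \<beta> i n * step_increment i) + \<beta> n * sigmaE M N U n)"
    unfolding step_bound_def betaz_mult_sum_Bprod unfolding b(1) by (simp add: mult.commute)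
  finally show ?thesis .
qed

end

theorem proposition1:
  fixes N :: "real ^ 'd \<Rightarrow> real"
    and T :: "real ^ 'd \<Rightarrow> real ^ 'd"
    and M :: "'w measure"
    and \<beta> :: "nat \<Rightarrow> real"
    and x0 :: "real ^ 'd"
    and x :: "nat \<Rightarrow> 'w \<Rightarrow> real ^ 'd"
    and U :: "nat \<Rightarrow> 'w \<Rightarrow> real ^ 'd"
    and \<kappa> :: real
  assumes "is_norm N"
    and "nonexpansive_wrt N T"
    and "\<exists>p. T p = p"
    and "prob_space M"
    and "\<And>n. n \<ge> 1 \<Longrightarrow> 0 < \<beta> n \<and> \<beta> n < 1"
    and "\<And>n. n \<ge> 1 \<Longrightarrow> \<beta> n \<le> \<beta> (Suc n)"
    and "\<beta> \<longlonglongrightarrow> 1"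
    and "\<And>\<omega>. x 0 \<omega> = x0"
    and "\<And>n \<omega>. n \<ge> 1 \<Longrightarrow>
           x n \<omega> = (1 - \<beta> n) *\<^sub>R x0 + \<beta> n *\<^sub>R (T (x (n - 1) \<omega>) + U n \<omega>)"
    and "\<And>n. n \<ge> 1 \<Longrightarrow> U n \<in> borel_measurable M"
    and "\<And>n. n \<ge> 1 \<Longrightarrow> integrable M (U n)"
    and "\<And>n. n \<ge> 1 \<Longrightarrow> (\<integral>\<omega>. U n \<omega> \<partial>M) = 0"
    and "\<And>n. n \<ge> 1 \<Longrightarrow> integrable M (\<lambda>\<omega>. N (U n \<omega>))"
    and "\<kappa> \<ge> 0"
    and "\<And>n. (\<integral>\<^sup>+\<omega>. ennreal (N (T (x n \<omega>) - x0)) \<partial>M) \<le> ennreal \<kappa>"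
    and "n \<ge> 1"
  shows "(\<integral>\<^sup>+\<omega>. ennreal (N (x n \<omega> - T (x n \<omega>))) \<partial>M)
         \<le> ennreal (\<kappa> * (1 - \<beta> n)
              + (\<Sum>i=1..n. Bprod \<beta> i n *
                   (\<kappa> * (betaz \<beta> i - betaz \<beta> (i - 1))
                    + betaz \<beta> i * sigmaE M N U i
                    + betaz \<beta> (i - 1) * sigmaE M N U (i - 1)))
              + \<beta> n * sigmaE M N U n)"
proof -
  interpret stochastic_halpern N T M \<beta> x0 x U \<kappa>
    by unfold_locales (use assms(1,2,5,6,8-10,13-15) in \<open>auto simp: less_imp_le\<close>)
  show ?thesis
    using expected_residual_le[OF assms(16)] by (simp add: step_increment_def)
qed

end
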